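(* Let $d\ge2$, let $G$ be a closed germ, and let $s\in S_{\rm o}$. Then $s\in G$ if and only if the polar point $s^*$ lies on the boundary (relative to the hyperplane $H$) of the polar set $G^*$.
   Context: Fix an integer $d\ge 2$. $\langle\cdot,\cdot\rangle$ is the standard inner product on $\mathbb{R}^{d^2}$, $\|\cdot\|$ the Euclidean norm. $\Delta=\{p\in\mathbb{R}^{d^2}: p(i)\ge0,\ \sum_ip(i)=1\}$; $H=\{u\in\mathbb{R}^{d^2}:\sum_i u(i)=1\}$; $c=(1/d^2,\dots,1/d^2)$. For $A\subseteq H$ the polar is $A^*=\{u\in H:\langle u,v\rangle\ge\frac{1}{d(d+1)}\ \forall v\in A\}$. Radii: $r_{\rm o}^2=\frac{d-1}{d^2(d+1)}$, $r_{\rm i}^2=\frac{1}{d^2(d^2-1)}$. Out-sphere $S_{\rm o}=\{u\in H:\|u-c\|=r_{\rm o}\}$. For $s\in H$, $s\neq c$, the polar point of $s$ is $s^*=c-\frac{r_{\rm o}r_{\rm i}}{\|s-c\|^2}(s-c)$. A subset $A\subseteq\Delta$ is a germ if $\frac{1}{d(d+1)}\le\langle p,s\rangle\le\frac{2}{d(d+1)}$ for all $p,s\in A$. *)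

theory Defs
  imports "HOL-Analysis.Analysis"
begin

text \<open>Vectors of R^(d^2) are modelled as real^'n with CARD('n) = d^2.\<close>

definition prob_simplex :: "(real^'n) set" where
  "prob_simplex = {p. (\<forall>i. p $ i \<ge> 0) \<and> (\<Sum>i\<in>UNIV. p $ i) = 1}"

definition hyp :: "(real^'n) set" where
  "hyp = {u. (\<Sum>i\<in>UNIV. u $ i) = 1}"

definition centre :: "nat \<Rightarrow> real^'n" where
  "centre d = (\<chi> i. 1 / (real d)^2)"

definition polar :: "nat \<Rightarrow> (real^'n) set \<Rightarrow> (real^'n) set" where
  "polar d A = {u \<in> hyp. \<forall>v\<in>A. u \<bullet> v \<ge> 1 / (real d * (real d + 1))}"

definition r_out :: "nat \<Rightarrow> real" where
  "r_out d = sqrt ((real d - 1) / ((real d)^2 * (real d + 1)))"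

definition r_in :: "nat \<Rightarrow> real" where
  "r_in d = sqrt (1 / ((real d)^2 * ((real d)^2 - 1)))"

definition out_sphere :: "nat \<Rightarrow> (real^'n) set" where
  "out_sphere d = {u \<in> hyp. norm (u - centre d) = r_out d}"

definition polar_point :: "nat \<Rightarrow> real^'n \<Rightarrow> real^'n" where
  "polar_point d s = centre d - (r_out d * r_in d / (norm (s - centre d))^2) *\<^sub>R (s - centre d)"

definition germ :: "nat \<Rightarrow> (real^'n) set \<Rightarrow> bool" where
  "germ d A \<longleftrightarrow> A \<subseteq> prob_simplex \<and>
     (\<forall>p\<in>A. \<forall>s\<in>A. 1 / (real d * (real d + 1)) \<le> p \<bullet> s \<and> p \<bullet> s \<le> 2 / (real d * (real d + 1)))"

end

theory Submission imports Defs begin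

text \<open>Translating by the centre \<open>c\<close> turns the hyperplane \<open>H\<close> into a linear subspace, on
which the inner product of \<open>H\<close> is shifted by the constant \<open>1/d\<^sup>2\<close>. The germ inequalities
then say that \<open>G\<close> lies in the ball of radius \<open>r\<^sub>o\<close> about \<open>c\<close>, and \<open>G\<^sup>*\<close> is cut out of \<open>H\<close>
by the half-spaces \<open>(u - c) \<bullet> (v - c) \<ge> -r\<^sub>o r\<^sub>i\<close>, \<open>v \<in> G\<close>. For \<open>s\<close> on the out-sphere the
functional \<open>v \<mapsto> (s - c) \<bullet> (v - c)\<close> is at most \<open>r\<^sub>o\<^sup>2\<close> on this ball, with equality only at
\<open>v = s\<close>. Hence \<open>s\<^sup>* = c - (r\<^sub>i/r\<^sub>o)(s - c)\<close> always lies in \<open>G\<^sup>*\<close>; if \<open>s \<in> G\<close>, the half-space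
of \<open>s\<close> passes through \<open>s\<^sup>*\<close> and points beyond \<open>s\<^sup>*\<close> on the ray from \<open>c\<close> leave \<open>G\<^sup>*\<close>;
if \<open>s \<notin> G\<close>, compactness keeps the functional uniformly below \<open>r\<^sub>o\<^sup>2\<close> on \<open>G\<close>, which leaves
room for a whole ball around \<open>s\<^sup>*\<close> inside \<open>G\<^sup>*\<close>.\<close>

definition polar_about :: "'a::real_inner \<Rightarrow> real \<Rightarrow> 'a set \<Rightarrow> 'a set" where
  "polar_about c a K = {u. \<forall>v\<in>K. (u - c) \<bullet> (v - c) \<ge> -a}"

lemma polar_about_empty [simp]: "polar_about c a {} = UNIV"
  by (simp add: polar_about_def)

lemma in_frontier_of_subtopology_iff:
  fixes P S :: "'a::metric_space set"
  assumes "P \<subseteq> S" "p \<in> P"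
  shows "p \<in> (top_of_set S) frontier_of P \<longleftrightarrow> (\<forall>e>0. \<not> S \<inter> ball p e \<subseteq> P)"
proof -
  have "p \<in> (top_of_set S) closure_of P"
    using closure_of_subset[of P "top_of_set S"] assms by auto
  moreover have "p \<in> (top_of_set S) interior_of P \<longleftrightarrow> (\<exists>e>0. S \<inter> ball p e \<subseteq> P)"
  proof
    assume "p \<in> (top_of_set S) interior_of P"
    then obtain T where "openin (top_of_set S) T" "p \<in> T" "T \<subseteq> P"
      unfolding interior_of_def by blast
    then show "\<exists>e>0. S \<inter> ball p e \<subseteq> P"
      unfolding openin_euclidean_subtopology_iff by (force simp: dist_commute)
  next
    assume "\<exists>e>0. S \<inter> ball p e \<subseteq> P"
    then obtain e where "e > 0" "S \<inter> ball p e \<subseteq> P" by blast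
    moreover have "openin (top_of_set S) (S \<inter> ball p e)"
      by (simp add: openin_open_Int)
    ultimately show "p \<in> (top_of_set S) interior_of P"
      using assms unfolding interior_of_def by auto
  qed
  ultimately show ?thesis by (simp add: frontier_of_def)
qed

lemma inner_le_square_of_norm_le:
  fixes w y :: "'a::real_inner"
  assumes "norm y \<le> norm w"
  shows "w \<bullet> y \<le> (norm w)\<^sup>2" and "w \<bullet> y = (norm w)\<^sup>2 \<Longrightarrow> y = w"
proof -
  have "(norm y)\<^sup>2 \<le> (norm w)\<^sup>2" using assms by (simp add: power_mono)
  moreover have "(norm (w - y))\<^sup>2 = (norm w)\<^sup>2 + (norm y)\<^sup>2 - 2 * (w \<bullet> y)"
    using dot_norm_neg[of w y] by simp
  moreover have "0 \<le> (norm (w - y))\<^sup>2" by simp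
  ultimately show "w \<bullet> y \<le> (norm w)\<^sup>2" by linarith
  assume "w \<bullet> y = (norm w)\<^sup>2"
  with \<open>(norm y)\<^sup>2 \<le> (norm w)\<^sup>2\<close> \<open>(norm (w - y))\<^sup>2 = _\<close> have "(norm (w - y))\<^sup>2 \<le> 0" by linarith
  then show "y = w" by simp
qed

lemma reflection_in_polar_about:
  fixes c s :: "'a::real_inner"
  assumes "K \<subseteq> cball c r" "norm (s - c) = r" "\<alpha> \<ge> 0"
  shows "c - \<alpha> *\<^sub>R (s - c) \<in> polar_about c (\<alpha> * r\<^sup>2) K"
proof -
  have "-(\<alpha> * r\<^sup>2) \<le> -\<alpha> * ((s - c) \<bullet> (v - c))" if "v \<in> K" for v
  proof -
    have "norm (v - c) \<le> norm (s - c)"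
      using assms that by (auto simp: dist_norm norm_minus_commute)
    then have "(s - c) \<bullet> (v - c) \<le> r\<^sup>2"
      using inner_le_square_of_norm_le(1) assms(2) by metis
    then show ?thesis using assms(3) by (simp add: mult_left_mono)
  qed
  then show ?thesis by (simp add: polar_about_def)
qed

lemma further_reflection_notin_polar_about:
  fixes c s :: "'a::real_inner"
  assumes "s \<in> K" "norm (s - c) = r" "r > 0" "\<alpha> < \<mu>"
  shows "c - \<mu> *\<^sub>R (s - c) \<notin> polar_about c (\<alpha> * r\<^sup>2) K"
proof -
  have "(c - \<mu> *\<^sub>R (s - c) - c) \<bullet> (s - c) = -\<mu> * r\<^sup>2"
    using assms(2) by (simp flip: power2_norm_eq_inner)
  moreover have "\<alpha> * r\<^sup>2 < \<mu> * r\<^sup>2" using assms by simp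
  ultimately show ?thesis using assms(1) by (force simp: polar_about_def)
qed

lemma ball_around_reflection_in_polar_about:
  fixes c s :: "'a::real_inner"
  assumes "compact K" "K \<subseteq> cball c r" "norm (s - c) = r" "r > 0" "s \<notin> K" "\<alpha> > 0"
  shows "\<exists>e>0. ball (c - \<alpha> *\<^sub>R (s - c)) e \<subseteq> polar_about c (\<alpha> * r\<^sup>2) K"
proof (cases "K = {}")
  case False
  let ?f = "\<lambda>v. (s - c) \<bullet> (v - c)"
  obtain v0 where "v0 \<in> K" and v0_max: "\<And>v. v \<in> K \<Longrightarrow> ?f v \<le> ?f v0"
  proof -
    have "continuous_on K ?f" by (intro continuous_intros)
    then show thesis using continuous_attains_sup[OF assms(1) False] that by blast
  qed
  have norm_le: "norm (v - c) \<le> norm (s - c)" if "v \<in> K" for v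
    using assms that by (auto simp: dist_norm norm_minus_commute)
  have "?f v0 \<noteq> r\<^sup>2"
    using inner_le_square_of_norm_le(2)[OF norm_le[OF \<open>v0 \<in> K\<close>]] \<open>v0 \<in> K\<close> assms(3,5) by auto
  then have "?f v0 < r\<^sup>2"
    using inner_le_square_of_norm_le(1)[OF norm_le[OF \<open>v0 \<in> K\<close>]] assms(3) by simp
  define e where "e = \<alpha> * (r\<^sup>2 - ?f v0) / r"
  have "e > 0" using \<open>?f v0 < r\<^sup>2\<close> assms by (simp add: e_def)
  moreover have "u \<in> polar_about c (\<alpha> * r\<^sup>2) K" if "u \<in> ball (c - \<alpha> *\<^sub>R (s - c)) e" for u
  proof -
    have "-(\<alpha> * r\<^sup>2) \<le> (u - c) \<bullet> (v - c)" if "v \<in> K" for v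
    proof -
      let ?p = "c - \<alpha> *\<^sub>R (s - c)"
      have "\<bar>(u - ?p) \<bullet> (v - c)\<bar> \<le> norm (u - ?p) * norm (v - c)"
        by (rule Cauchy_Schwarz_ineq2)
      also have "\<dots> \<le> e * r"
        using \<open>u \<in> ball ?p e\<close> norm_le[OF that] assms(3) \<open>e > 0\<close>
        by (intro mult_mono) (auto simp: dist_norm norm_minus_commute)
      finally have "(u - ?p) \<bullet> (v - c) \<ge> -(e * r)" by linarith
      moreover have "\<alpha> * ?f v \<le> \<alpha> * ?f v0" using v0_max[OF that] assms(6) by simp
      moreover have "(u - c) \<bullet> (v - c) = (u - ?p) \<bullet> (v - c) - \<alpha> * ?f v"
        by (simp add: inner_diff_left)
      moreover have "e * r = \<alpha> * r\<^sup>2 - \<alpha> * ?f v0"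
        using assms(4) by (simp add: e_def field_simps power2_eq_square)
      ultimately show ?thesis by linarith
    qed
    then show ?thesis by (simp add: polar_about_def)
  qed
  ultimately show ?thesis by blast
qed (auto intro: exI[of _ 1])

theorem reflection_in_relative_frontier_iff:
  fixes c s :: "'a::real_inner"
  assumes "affine S" "c \<in> S" "s \<in> S"
    and "compact K" "K \<subseteq> cball c r" "norm (s - c) = r" "r > 0" "\<alpha> > 0"
  shows "s \<in> K \<longleftrightarrow>
    c - \<alpha> *\<^sub>R (s - c) \<in> (top_of_set S) frontier_of (S \<inter> polar_about c (\<alpha> * r\<^sup>2) K)"
proof -
  have on_ray: "c - \<mu> *\<^sub>R (s - c) \<in> S" for \<mu>
    using mem_affine[OF assms(1-3), of "1 + \<mu>" "-\<mu>"] by (simp add: algebra_simps)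
  have "c - \<alpha> *\<^sub>R (s - c) \<in> S \<inter> polar_about c (\<alpha> * r\<^sup>2) K"
    using on_ray reflection_in_polar_about[OF assms(5,6)] assms(8) by simp
  note frontier_iff = in_frontier_of_subtopology_iff[OF Int_lower1 this]
  show ?thesis
  proof
    assume "s \<in> K"
    have "\<not> S \<inter> ball (c - \<alpha> *\<^sub>R (s - c)) e \<subseteq> polar_about c (\<alpha> * r\<^sup>2) K" if "e > 0" for e
    proof -
      define \<mu> where "\<mu> = \<alpha> + e / (2 * r)"
      have "(c - \<alpha> *\<^sub>R (s - c)) - (c - \<mu> *\<^sub>R (s - c)) = (\<mu> - \<alpha>) *\<^sub>R (s - c)"
        by (simp add: scaleR_diff_left)
      then have "dist (c - \<alpha> *\<^sub>R (s - c)) (c - \<mu> *\<^sub>R (s - c)) = \<bar>\<mu> - \<alpha>\<bar> * r"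
        using assms(6) by (simp add: dist_norm)
      also have "\<dots> < e" using that assms(7) by (simp add: \<mu>_def)
      finally have "c - \<mu> *\<^sub>R (s - c) \<in> S \<inter> ball (c - \<alpha> *\<^sub>R (s - c)) e"
        using on_ray by simp
      moreover have "\<alpha> < \<mu>" using that assms(7) by (simp add: \<mu>_def)
      ultimately show ?thesis
        using further_reflection_notin_polar_about[OF \<open>s \<in> K\<close> assms(6,7)] by blast
    qed
    then show "c - \<alpha> *\<^sub>R (s - c) \<in> (top_of_set S) frontier_of (S \<inter> polar_about c (\<alpha> * r\<^sup>2) K)"
      using frontier_iff by blast
  next
    assume "c - \<alpha> *\<^sub>R (s - c) \<in> (top_of_set S) frontier_of (S \<inter> polar_about c (\<alpha> * r\<^sup>2) K)"
    then show "s \<in> K"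
      using frontier_iff ball_around_reflection_in_polar_about[OF assms(4-7) _ assms(8)] by blast
  qed
qed

lemma affine_hyp: "affine (hyp :: (real^'n) set)"
  by (simp add: affine_def hyp_def sum.distrib flip: sum_distrib_left)

lemma centre_in_hyp:
  assumes "CARD('n) = d\<^sup>2" "d \<ge> 1"
  shows "(centre d :: real^'n) \<in> hyp"
  using assms by (simp add: hyp_def centre_def)

lemma inner_eq_inner_about_centre:
  assumes "CARD('n) = d\<^sup>2" "d \<ge> 1" "u \<in> hyp" "v \<in> hyp"
  shows "u \<bullet> v = (u - centre d) \<bullet> (v - (centre d :: real^'n)) + 1 / (real d)\<^sup>2"
proof -
  have inner_centre: "x \<bullet> (centre d :: real^'n) = 1 / (real d)\<^sup>2" if "x \<in> hyp" for x
    using that by (simp add: inner_vec_def centre_def hyp_def flip: sum_divide_distrib)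
  show ?thesis
    using inner_centre assms centre_in_hyp[OF assms(1,2)]
    by (simp add: inner_diff inner_commute)
qed

lemma
  assumes "d \<ge> 2"
  shows r_out_pos: "r_out d > 0" and r_in_pos: "r_in d > 0"
    and r_out_squared: "(r_out d)\<^sup>2 = 2 / (real d * (real d + 1)) - 1 / (real d)\<^sup>2"
    and r_out_mult_r_in: "r_out d * r_in d = 1 / (real d)\<^sup>2 - 1 / (real d * (real d + 1))"
proof -
  have d: "real d \<ge> 2" using assms by simp
  have sq: "(real d)\<^sup>2 - 1 = (real d - 1) * (real d + 1)" by (simp add: power2_eq_square algebra_simps)
  have out_pos: "(real d - 1) / ((real d)\<^sup>2 * (real d + 1)) > 0" using d by simp
  moreover have in_pos: "1 / ((real d)\<^sup>2 * ((real d)\<^sup>2 - 1)) > 0" using d unfolding sq by simp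
  ultimately show "r_out d > 0" "r_in d > 0" by (simp_all add: r_out_def r_in_def)
  show "(r_out d)\<^sup>2 = 2 / (real d * (real d + 1)) - 1 / (real d)\<^sup>2"
  proof -
    have "(r_out d)\<^sup>2 = (real d - 1) / ((real d)\<^sup>2 * (real d + 1))"
      using out_pos by (simp add: r_out_def)
    also have "\<dots> = 2 / (real d * (real d + 1)) - 1 / (real d)\<^sup>2"
      using d by (simp add: divide_simps) (simp add: algebra_simps power2_eq_square)
    finally show ?thesis .
  qed
  have "(real d - 1) / ((real d)\<^sup>2 * (real d + 1)) * (1 / ((real d)\<^sup>2 * ((real d)\<^sup>2 - 1)))
      = (1 / ((real d)\<^sup>2 * (real d + 1)))\<^sup>2"
    using d unfolding sq by (simp add: power2_eq_square)
  then have "r_out d * r_in d = 1 / ((real d)\<^sup>2 * (real d + 1))"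
    using d by (simp add: r_out_def r_in_def flip: real_sqrt_mult)
  also have "\<dots> = 1 / (real d)\<^sup>2 - 1 / (real d * (real d + 1))"
    using d by (simp add: divide_simps) (simp add: algebra_simps power2_eq_square)
  finally show "r_out d * r_in d = 1 / (real d)\<^sup>2 - 1 / (real d * (real d + 1))" .
qed

lemma germ_subset_hyp: "germ d G \<Longrightarrow> G \<subseteq> hyp"
  by (auto simp: germ_def prob_simplex_def hyp_def)

lemma germ_subset_cball:
  assumes "d \<ge> 2" "CARD('n) = d\<^sup>2" "germ d (G :: (real^'n) set)"
  shows "G \<subseteq> cball (centre d) (r_out d)"
proof
  fix v assume "v \<in> G"
  then have "v \<bullet> v \<le> 2 / (real d * (real d + 1))" and "v \<in> hyp"
    using assms(3) germ_subset_hyp by (auto simp: germ_def)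
  then have "(norm (v - centre d))\<^sup>2 \<le> (r_out d)\<^sup>2"
    using inner_eq_inner_about_centre[OF assms(2) _ \<open>v \<in> hyp\<close> \<open>v \<in> hyp\<close>] assms(1)
    by (simp add: r_out_squared power2_norm_eq_inner)
  then show "v \<in> cball (centre d) (r_out d)"
    using r_out_pos[OF assms(1)] by (simp add: dist_norm norm_minus_commute power2_le_iff_abs_le)
qed

lemma polar_eq_hyp_Int_polar_about:
  assumes "d \<ge> 2" "CARD('n) = d\<^sup>2" "G \<subseteq> (hyp :: (real^'n) set)"
  shows "polar d G = hyp \<inter> polar_about (centre d) (r_out d * r_in d) G"
  using assms inner_eq_inner_about_centre[OF assms(2)]
  by (force simp: polar_def polar_about_def r_out_mult_r_in)

lemma polar_point_out_sphere:
  assumes "d \<ge> 2" "s \<in> out_sphere d"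
  shows "polar_point d s = centre d - (r_in d / r_out d) *\<^sub>R (s - centre d)"
  using assms r_out_pos[OF assms(1)]
  by (simp add: out_sphere_def polar_point_def power2_eq_square)

theorem mainTheorem7:
  fixes d :: nat and G :: "(real^'n) set" and s :: "real^'n"
  assumes "d \<ge> 2" and "CARD('n) = d^2"
    and "germ d G" and "closed G"
    and "s \<in> out_sphere d"
  shows "s \<in> G \<longleftrightarrow> polar_point d s \<in> (top_of_set hyp) frontier_of (polar d G)"
proof -
  have cball: "G \<subseteq> cball (centre d) (r_out d)"
    using germ_subset_cball assms(1-3) by blast
  then have "compact G"
    using assms(4) bounded_subset[OF bounded_cball] by (simp add: compact_eq_bounded_closed)
  have "s \<in> hyp" "norm (s - centre d) = r_out d"
    using assms(5) by (simp_all add: out_sphere_def)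
  have "r_in d / r_out d > 0"
    using r_out_pos[OF assms(1)] r_in_pos[OF assms(1)] by simp
  have scale: "r_in d / r_out d * (r_out d)\<^sup>2 = r_out d * r_in d"
    using r_out_pos[OF assms(1)] by (simp add: power2_eq_square)
  have "s \<in> G \<longleftrightarrow> centre d - (r_in d / r_out d) *\<^sub>R (s - centre d)
      \<in> (top_of_set hyp) frontier_of (hyp \<inter> polar_about (centre d) (r_out d * r_in d) G)"
    using reflection_in_relative_frontier_iff[OF affine_hyp centre_in_hyp[OF assms(2)]
        \<open>s \<in> hyp\<close> \<open>compact G\<close> cball \<open>norm (s - centre d) = r_out d\<close>
        r_out_pos[OF assms(1)] \<open>r_in d / r_out d > 0\<close>] assms(1)
    unfolding scale by simp
  then show ?thesis
    using polar_eq_hyp_Int_polar_about[OF assms(1,2) germ_subset_hyp[OF assms(3)]]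
      polar_point_out_sphere[OF assms(1,5)] by simp
qed

end
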